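(* Every finitely-generated $\underline{\mathbb Z/2}$-module $M$ (i.e. with $M_\Theta$ and $M_\bullet$ finite-dimensional) is isomorphic to a direct sum of copies of $H$, $H^{op}$, $F$, $S_\bullet$ and $S_\Theta$. The number of summands of each type is uniquely determined: letting $f$ be the rank of $1+t\colon M_\Theta\to M_\Theta$, the number of $F$ summands is $f$; the number of $H^{op}$ summands is $\dim M_\Theta-f-\dim\ker p_*$; the number of $H$ summands is $\dim M_\bullet-\dim\ker p^*-f$; the number of $S_\bullet$ summands is $\dim\ker p^*-\dim M_\Theta+f+\dim\ker p_*$; and the number of $S_\Theta$ summands is $\dim\ker p_*-\dim M_\bullet+\dim\ker p^*$.
   Context: A $\underline{\mathbb Z/2}$-module is a pair of $\mathbb F_2$-vector spaces $M_\Theta,M_\bullet$ with linear maps $t\colon M_\Theta\to M_\Theta$, $p^*\colon M_\bullet\to M_\Theta$, $p_*\colon M_\Theta\to M_\bullet$ satisfying $tp^*=p^*$, $p_*t=p_*$, $t^2=1$, $p^*p_*=1+t$ and $p_*p^*=0$; dimensions are over $\mathbb F_2$. The modules: $H$ has both spaces $\mathbb F_2$, $t=p^*=\mathrm{id}$, $p_*=0$; $H^{op}$ has both spaces $\mathbb F_2$, $t=p_*=\mathrm{id}$, $p^*=0$; $F$ has $F_\Theta=\mathbb F_2^2$ with $t$ the swap, $F_\bullet=\mathbb F_2$, $p_*(x,y)=x+y$, $p^*(z)=(z,z)$; $S_\bullet$ has $(S_\bullet)_\Theta=0$, $(S_\bullet)_\bullet=\mathbb F_2$; $S_\Theta$ has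 $(S_\Theta)_\Theta=\mathbb F_2$ with $t=\mathrm{id}$ and $(S_\Theta)_\bullet=0$. *)

theory Defs
  imports "HOL-Analysis.Analysis" "HOL-Library.Z2" "HOL-Library.Function_Algebras"
begin

text \<open>A Z/2-module consists of two F_2-vector
spaces M_Theta, M_bullet, given as subspaces (carriers) of ambient F_2-vector
spaces (with scalar multiplications sa, sb), and maps t, p^*, p_*.\<close>

record ('a, 'b) zmod =
  ThC :: "'a set"
  BuC :: "'b set"
  tm  :: "'a \<Rightarrow> 'a"
  pup :: "'b \<Rightarrow> 'a"
  pdn :: "'a \<Rightarrow> 'b"

definition lin_on :: "(bit \<Rightarrow> 'a::plus \<Rightarrow> 'a) \<Rightarrow> (bit \<Rightarrow> 'c::plus \<Rightarrow> 'c) \<Rightarrow> 'a set \<Rightarrow> ('a \<Rightarrow> 'c) \<Rightarrow> bool"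
  where "lin_on s1 s2 V f \<longleftrightarrow>
     (\<forall>x\<in>V. \<forall>y\<in>V. f (x + y) = f x + f y) \<and> (\<forall>c. \<forall>x\<in>V. f (s1 c x) = s2 c (f x))"

definition is_zmod :: "(bit \<Rightarrow> 'a::ab_group_add \<Rightarrow> 'a) \<Rightarrow> (bit \<Rightarrow> 'b::ab_group_add \<Rightarrow> 'b)
    \<Rightarrow> ('a, 'b) zmod \<Rightarrow> bool"
  where "is_zmod sa sb M \<longleftrightarrow>
     vector_space sa \<and> vector_space sb \<and>
     module.subspace sa (ThC M) \<and> module.subspace sb (BuC M) \<and>
     tm M ` ThC M \<subseteq> ThC M \<and> pup M ` BuC M \<subseteq> ThC M \<and> pdn M ` ThC M \<subseteq> BuC M \<and>
     lin_on sa sa (ThC M) (tm M) \<and> lin_on sb sa (BuC M) (pup M) \<and> lin_on sa sb (ThC M) (pdn M) \<and>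
     (\<forall>y\<in>BuC M. tm M (pup M y) = pup M y) \<and>
     (\<forall>x\<in>ThC M. pdn M (tm M x) = pdn M x) \<and>
     (\<forall>x\<in>ThC M. tm M (tm M x) = x) \<and>
     (\<forall>x\<in>ThC M. pup M (pdn M x) = x + tm M x) \<and>
     (\<forall>y\<in>BuC M. pdn M (pup M y) = 0)"

definition fin_gen :: "(bit \<Rightarrow> 'a::ab_group_add \<Rightarrow> 'a) \<Rightarrow> (bit \<Rightarrow> 'b::ab_group_add \<Rightarrow> 'b)
    \<Rightarrow> ('a, 'b) zmod \<Rightarrow> bool"
  where "fin_gen sa sb M \<longleftrightarrow>
     (\<exists>B. finite B \<and> B \<subseteq> ThC M \<and> module.span sa B = ThC M) \<and>
     (\<exists>B. finite B \<and> B \<subseteq> BuC M \<and> module.span sb B = BuC M)"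

definition zmod_iso ::
  "(bit \<Rightarrow> 'a::ab_group_add \<Rightarrow> 'a) \<Rightarrow> (bit \<Rightarrow> 'b::ab_group_add \<Rightarrow> 'b)
   \<Rightarrow> (bit \<Rightarrow> 'c::ab_group_add \<Rightarrow> 'c) \<Rightarrow> (bit \<Rightarrow> 'd::ab_group_add \<Rightarrow> 'd)
   \<Rightarrow> ('a, 'b) zmod \<Rightarrow> ('c, 'd) zmod \<Rightarrow> bool"
  where "zmod_iso sa sb sc sd M N \<longleftrightarrow>
     (\<exists>\<phi> \<psi>. lin_on sa sc (ThC M) \<phi> \<and> lin_on sb sd (BuC M) \<psi> \<and>
        bij_betw \<phi> (ThC M) (ThC N) \<and> bij_betw \<psi> (BuC M) (BuC N) \<and>
        (\<forall>x\<in>ThC M. \<phi> (tm M x) = tm N (\<phi> x)) \<and>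
        (\<forall>y\<in>BuC M. \<phi> (pup M y) = pup N (\<psi> y)) \<and>
        (\<forall>x\<in>ThC M. \<psi> (pdn M x) = pdn N (\<phi> x)))"

text \<open>The five standard modules, realised inside F_2^2 = bit \<times> bit
(F_2 is embedded as the first coordinate where only one dimension is needed).\<close>
datatype kind = KH | KHop | KF | KSbul | KSth

fun std :: "kind \<Rightarrow> (bit \<times> bit, bit \<times> bit) zmod" where
  "std KH = \<lparr>ThC = {(x, 0) | x. True}, BuC = {(x, 0) | x. True},
             tm = id, pup = id, pdn = (\<lambda>_. 0)\<rparr>"
| "std KHop = \<lparr>ThC = {(x, 0) | x. True}, BuC = {(x, 0) | x. True},
             tm = id, pup = (\<lambda>_. 0), pdn = id\<rparr>"
| "std KF = \<lparr>ThC = UNIV, BuC = {(z, 0) | z. True},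
             tm = (\<lambda>(x, y). (y, x)), pup = (\<lambda>(z, _). (z, z)), pdn = (\<lambda>(x, y). (x + y, 0))\<rparr>"
| "std KSbul = \<lparr>ThC = {0}, BuC = {(z, 0) | z. True},
             tm = (\<lambda>_. 0), pup = (\<lambda>_. 0), pdn = (\<lambda>_. 0)\<rparr>"
| "std KSth = \<lparr>ThC = {(x, 0) | x. True}, BuC = {0},
             tm = id, pup = (\<lambda>_. 0), pdn = (\<lambda>_. 0)\<rparr>"

definition sD :: "bit \<Rightarrow> ('i \<Rightarrow> bit \<times> bit) \<Rightarrow> ('i \<Rightarrow> bit \<times> bit)"
  where "sD c f = (\<lambda>i. (c * fst (f i), c * snd (f i)))"

definition dsum :: "'i set \<Rightarrow> ('i \<Rightarrow> ('a::zero, 'b::zero) zmod) \<Rightarrow> ('i \<Rightarrow> 'a, 'i \<Rightarrow> 'b) zmod"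
  where "dsum I Ms =
    \<lparr>ThC = {f. (\<forall>i\<in>I. f i \<in> ThC (Ms i)) \<and> (\<forall>i. i \<notin> I \<longrightarrow> f i = 0)},
     BuC = {g. (\<forall>i\<in>I. g i \<in> BuC (Ms i)) \<and> (\<forall>i. i \<notin> I \<longrightarrow> g i = 0)},
     tm = (\<lambda>f i. if i \<in> I then tm (Ms i) (f i) else 0),
     pup = (\<lambda>g i. if i \<in> I then pup (Ms i) (g i) else 0),
     pdn = (\<lambda>f i. if i \<in> I then pdn (Ms i) (f i) else 0)\<rparr>"

end

(*
  Over F_2 a finite subspace X has exactly 2 ^ dim X elements, so every dimension in the
  statement can be read off a cardinality.

  Uniqueness: an isomorphism carries M_Theta, M_bullet, im (1 + t), ker p_* and ker p^* onto the
  corresponding sets of the direct sum, and for a direct sum each of these sets is the product of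
  the corresponding sets of the summands.  This yields five linear equations in the numbers of
  summands of each kind, whose solution is the stated formulas.

  Existence: choose nested bases of im (1 + t) <= im p^* <= ker p_* in M_Theta and of
  p_*(M_Theta) \<inter> ker p^* <= ker p^* in M_bullet.  A basis vector c of im (1 + t) yields an F
  summand generated by some x with x + t x = c, each further basis vector of im p^* an H summand
  generated by a p^*-preimage, each further basis vector of ker p_* an S_Theta summand, each basis
  vector of p_*(M_Theta) \<inter> ker p^* an H^op summand generated by a p_*-preimage, and each further
  basis vector of ker p^* an S_bullet summand.  A filtration argument shows that the induced
  morphism from the direct sum is onto, and it is injective because both sides have the same
  number of elements: |M_Theta| = |im (1 + t)| |p_*(M_Theta) \<inter> ker p^*| |ker p_*| and
  |M_bullet| = |im p^*| |ker p^*|.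
*)

theory Submission
  imports Defs
begin

section \<open>Vector spaces over F_2\<close>

locale bit_vector_space = vector_space "s :: bit \<Rightarrow> 'v::ab_group_add \<Rightarrow> 'v" for s
begin

lemma add_self [simp]: "x + x = (0::'v)"
proof -
  have "x + x = s (1 + 1) x" by (simp only: scale_left_distrib scale_one)
  then show ?thesis by simp
qed

lemma minus_self [simp]: "- x = (x::'v)"
  using add_self[of x] by (metis add.inverse_unique)

lemma diff_eq_add [simp]: "x - y = (x + y::'v)"
  by (simp add: diff_conv_add_uminus)

lemma add_self_left [simp]: "x + (x + y) = (y::'v)"
  by (simp add: add.assoc[symmetric])

lemma subspace_if_add_closed:
  assumes "0 \<in> S" "\<And>x y. x \<in> S \<Longrightarrow> y \<in> S \<Longrightarrow> x + y \<in> S"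
  shows "subspace S"
  unfolding subspace_def
proof (intro conjI ballI allI)
  fix c x assume "x \<in> S" then show "s c x \<in> S" using assms by (cases c) auto
qed (use assms in auto)

lemma subspace_additive_image:
  fixes f :: "'w::ab_group_add \<Rightarrow> 'v"
  assumes "0 \<in> G" "\<And>x y. x \<in> G \<Longrightarrow> y \<in> G \<Longrightarrow> x + y \<in> G"
    and "\<And>x y. x \<in> G \<Longrightarrow> y \<in> G \<Longrightarrow> f (x + y) = f x + f y"
  shows "subspace (f ` G)"
proof (rule subspace_if_add_closed)
  have "f 0 = 0" using assms(3)[OF assms(1) assms(1)] by simp
  then show "0 \<in> f ` G" using assms(1) by force
next
  fix x y assume "x \<in> f ` G" "y \<in> f ` G"
  then obtain u v where "u \<in> G" "v \<in> G" "x = f u" "y = f v" by blast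
  then show "x + y \<in> f ` G" using assms(2,3) by (metis image_eqI)
qed

lemma additive_on_sum:
  fixes h :: "'v \<Rightarrow> 'w::ab_group_add"
  assumes "subspace V" "\<And>x y. x \<in> V \<Longrightarrow> y \<in> V \<Longrightarrow> h (x + y) = h x + h y"
    and "\<And>c. c \<in> C \<Longrightarrow> g c \<in> V"
  shows "h (sum g C) = (\<Sum>c\<in>C. h (g c))"
  using assms(3)
proof (induction C rule: infinite_finite_induct)
  case (insert c C)
  then show ?case using assms(1,2) by (simp add: subspace_sum)
qed (use assms(2)[of 0 0] subspace_0[OF assms(1)] in simp_all)

lemma span_insert_eq: "span (insert b B) = span B \<union> (\<lambda>x. b + x) ` span B"
proof
  show "span (insert b B) \<subseteq> span B \<union> (\<lambda>x. b + x) ` span B"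
  proof
    fix x assume "x \<in> span (insert b B)"
    then obtain k where k: "x - s k b \<in> span B" by (auto simp: span_insert)
    show "x \<in> span B \<union> (\<lambda>x. b + x) ` span B"
    proof (cases k)
      case zero then show ?thesis using k by simp
    next
      case one
      then have "x = b + (b + x)" "b + x \<in> span B" using k by (simp_all add: add.commute)
      then show ?thesis by blast
    qed
  qed
qed (auto intro: span_add span_base span_mono[THEN subsetD, of B])

lemma finite_span: "finite B \<Longrightarrow> finite (span B)"
  by (induction B rule: finite_induct) (simp_all add: span_insert_eq)

lemma card_span:
  assumes "finite B" "independent B"
  shows "card (span B) = 2 ^ card B"
  using assms
proof (induction B rule: finite_induct)
  case (insert b B)
  have nb: "b \<notin> span B" and "independent B"
    using insert.prems insert.hyps independent_insert by auto
  then have IH: "card (span B) = 2 ^ card B" using insert.IH by auto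
  have "span B \<inter> (\<lambda>x. b + x) ` span B = {}"
  proof (rule ccontr)
    assume "span B \<inter> (\<lambda>x. b + x) ` span B \<noteq> {}"
    then obtain y where "y \<in> span B" "b + y \<in> span B" by auto
    then have "(b + y) + y \<in> span B" by (simp add: span_add)
    with nb show False by (simp add: add.assoc)
  qed
  moreover have "card ((\<lambda>x. b + x) ` span B) = card (span B)"
    by (rule card_image) (simp add: inj_on_def)
  ultimately show ?case
    using IH card_Un_disjoint[of "span B" "(\<lambda>x. b + x) ` span B"] insert.hyps finite_span
    by (simp add: span_insert_eq)
qed simp

lemma card_subspace:
  assumes "subspace X" "finite X"
  shows "card X = 2 ^ dim X"
proof -
  obtain B where B: "B \<subseteq> X" "independent B" "X \<subseteq> span B" "card B = dim X"
    by (rule basis_exists)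
  have "span B = X" using B assms span_minimal[of B X] by auto
  moreover have "finite B" using B assms finite_subset by auto
  ultimately show ?thesis using card_span B by auto
qed

lemma dim_eq_if_card_eq:
  assumes "subspace X" "finite X" "card X = 2 ^ m"
  shows "dim X = m"
  using card_subspace[OF assms(1,2)] assms(3) by simp

lemma extend_basis_list:
  assumes "subspace X" "finite X" "set l \<subseteq> X" "independent (set l)" "distinct l"
  shows "\<exists>l'. distinct (l @ l') \<and> independent (set (l @ l')) \<and> span (set (l @ l')) = X"
proof -
  obtain B where B: "set l \<subseteq> B" "B \<subseteq> X" "independent B" "X \<subseteq> span B"
    using maximal_independent_subset_extend[OF assms(3,4)] by blast
  have "span B = X" using B assms(1) span_minimal[of B X] by auto
  have "finite B" using B(2) assms(2) finite_subset by auto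
  obtain l' where l': "set l' = B - set l" "distinct l'"
    using finite_distinct_list[of "B - set l"] \<open>finite B\<close> by blast
  have "set (l @ l') = B" using l'(1) B(1) by auto
  moreover have "distinct (l @ l')" using l' assms(5) by auto
  ultimately show ?thesis using B(3) \<open>span B = X\<close> by metis
qed

lemma exists_basis_list:
  assumes "subspace X" "finite X"
  shows "\<exists>l. distinct l \<and> independent (set l) \<and> span (set l) = X"
  using extend_basis_list[OF assms, of "[]"] by (simp add: independent_empty)

lemma card_span_list:
  assumes "distinct l" "independent (set l)"
  shows "card (span (set l)) = 2 ^ length l"
  using card_span[OF finite_set assms(2)] distinct_card[OF assms(1)] by simp

lemma card_eq_card_image_mult_card_kernel:
  fixes f :: "'v \<Rightarrow> 'w::ab_group_add"
  assumes "subspace A" "finite A"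
    and additive: "\<And>x y. x \<in> A \<Longrightarrow> y \<in> A \<Longrightarrow> f (x + y) = f x + f y"
  shows "card A = card (f ` A) * card {x \<in> A. f x = 0}"
proof -
  let ?K = "{x \<in> A. f x = 0}"
  have fibre: "card {x \<in> A. f x = y} = card ?K" if "y \<in> f ` A" for y
  proof -
    from that obtain x0 where x0: "x0 \<in> A" "f x0 = y" by blast
    have "y + y = 0" using additive[OF x0(1) x0(1)] additive[of 0 0] subspace_0[OF assms(1)] x0
      by simp
    then have "bij_betw (\<lambda>x. x + x0) ?K {x \<in> A. f x = y}"
      using x0 additive subspace_add[OF assms(1)]
      by (intro bij_betwI[where g = "\<lambda>x. x + x0"]) (auto simp: add.assoc)
    then show ?thesis by (simp add: bij_betw_same_card)
  qed
  have "card A = card (\<Union>y\<in>f ` A. {x \<in> A. f x = y})" by (rule arg_cong[where f = card]) auto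
  also have "\<dots> = (\<Sum>y\<in>f ` A. card {x \<in> A. f x = y})"
    by (rule card_UN_disjoint) (use assms(2) in auto)
  also have "\<dots> = card (f ` A) * card ?K" using fibre by simp
  finally show ?thesis .
qed

end

section \<open>Invariants and isomorphisms of Z/2-modules\<close>

definition im_one_plus_t :: "('a::plus, 'b) zmod \<Rightarrow> 'a set" where
  "im_one_plus_t M = (\<lambda>x. x + tm M x) ` ThC M"

definition ker_pdn :: "('a, 'b::zero) zmod \<Rightarrow> 'a set" where
  "ker_pdn M = {x \<in> ThC M. pdn M x = 0}"

definition ker_pup :: "('a::zero, 'b) zmod \<Rightarrow> 'b set" where
  "ker_pup M = {y \<in> BuC M. pup M y = 0}"

lemma lin_on_zero:
  fixes f :: "'a::monoid_add \<Rightarrow> 'c::ab_group_add"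
  assumes "lin_on s1 s2 V f" "0 \<in> V"
  shows "f 0 = 0"
  using assms unfolding lin_on_def by (metis add.right_neutral add_left_cancel)

lemma is_zmod_closed:
  assumes "is_zmod sa sb M"
  shows "0 \<in> ThC M" "0 \<in> BuC M"
    "x \<in> ThC M \<Longrightarrow> y \<in> ThC M \<Longrightarrow> x + y \<in> ThC M"
    "u \<in> BuC M \<Longrightarrow> v \<in> BuC M \<Longrightarrow> u + v \<in> BuC M"
    "x \<in> ThC M \<Longrightarrow> sa c x \<in> ThC M" "u \<in> BuC M \<Longrightarrow> sb c u \<in> BuC M"
    "x \<in> ThC M \<Longrightarrow> tm M x \<in> ThC M" "u \<in> BuC M \<Longrightarrow> pup M u \<in> ThC M"
    "x \<in> ThC M \<Longrightarrow> pdn M x \<in> BuC M"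
proof -
  interpret A: vector_space sa using assms by (simp add: is_zmod_def)
  interpret B: vector_space sb using assms by (simp add: is_zmod_def)
  have "A.subspace (ThC M)" "B.subspace (BuC M)" using assms by (simp_all add: is_zmod_def)
  then show "0 \<in> ThC M" "0 \<in> BuC M"
    "x \<in> ThC M \<Longrightarrow> y \<in> ThC M \<Longrightarrow> x + y \<in> ThC M"
    "u \<in> BuC M \<Longrightarrow> v \<in> BuC M \<Longrightarrow> u + v \<in> BuC M"
    "x \<in> ThC M \<Longrightarrow> sa c x \<in> ThC M" "u \<in> BuC M \<Longrightarrow> sb c u \<in> BuC M"
    by (simp_all add: A.subspace_def B.subspace_def)
  show "x \<in> ThC M \<Longrightarrow> tm M x \<in> ThC M" "u \<in> BuC M \<Longrightarrow> pup M u \<in> ThC M"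
    "x \<in> ThC M \<Longrightarrow> pdn M x \<in> BuC M"
    using assms by (auto simp: is_zmod_def)
qed

lemma zmod_iso_card_invariants:
  assumes "is_zmod sa sb M" "zmod_iso sa sb sc sd M N"
  shows "card (ThC N) = card (ThC M)" "card (BuC N) = card (BuC M)"
    "card (im_one_plus_t N) = card (im_one_plus_t M)"
    "card (ker_pdn N) = card (ker_pdn M)" "card (ker_pup N) = card (ker_pup M)"
proof -
  obtain \<phi> \<psi> where lin: "lin_on sa sc (ThC M) \<phi>" "lin_on sb sd (BuC M) \<psi>"
    and bij: "bij_betw \<phi> (ThC M) (ThC N)" "bij_betw \<psi> (BuC M) (BuC N)"
    and tm: "\<forall>x\<in>ThC M. \<phi> (tm M x) = tm N (\<phi> x)"
    and pup: "\<forall>y\<in>BuC M. \<phi> (pup M y) = pup N (\<psi> y)"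
    and pdn: "\<forall>x\<in>ThC M. \<psi> (pdn M x) = pdn N (\<phi> x)"
    using assms(2) unfolding zmod_iso_def by blast
  note closed = is_zmod_closed[OF assms(1)]
  have inj: "inj_on \<phi> (ThC M)" "inj_on \<psi> (BuC M)" and
    onto: "\<phi> ` ThC M = ThC N" "\<psi> ` BuC M = BuC N"
    using bij by (auto simp: bij_betw_def)
  have card_image_\<phi>: "card (\<phi> ` S) = card S" if "S \<subseteq> ThC M" for S
    using card_image inj_on_subset inj(1) that by metis
  have card_image_\<psi>: "card (\<psi> ` S) = card S" if "S \<subseteq> BuC M" for S
    using card_image inj_on_subset inj(2) that by metis
  have \<phi>_eq_0: "\<phi> x = 0 \<longleftrightarrow> x = 0" if "x \<in> ThC M" for x
    using inj(1) lin_on_zero[OF lin(1) closed(1)] closed(1) that by (metis inj_onD)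
  have \<psi>_eq_0: "\<psi> y = 0 \<longleftrightarrow> y = 0" if "y \<in> BuC M" for y
    using inj(2) lin_on_zero[OF lin(2) closed(2)] closed(2) that by (metis inj_onD)
  show "card (ThC N) = card (ThC M)" "card (BuC N) = card (BuC M)"
    using card_image_\<phi>[of "ThC M"] card_image_\<psi>[of "BuC M"] onto by simp_all
  have "\<phi> ` im_one_plus_t M = (\<lambda>x. \<phi> x + tm N (\<phi> x)) ` ThC M"
    unfolding im_one_plus_t_def image_image
    using lin(1) tm closed by (intro image_cong) (auto simp: lin_on_def)
  then have "\<phi> ` im_one_plus_t M = im_one_plus_t N"
    by (simp add: im_one_plus_t_def onto(1)[symmetric] image_image)
  moreover have "im_one_plus_t M \<subseteq> ThC M"
    using closed by (auto simp: im_one_plus_t_def)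
  ultimately show "card (im_one_plus_t N) = card (im_one_plus_t M)"
    using card_image_\<phi> by metis
  have "ker_pdn M = {x \<in> ThC M. pdn N (\<phi> x) = 0}"
    using pdn \<psi>_eq_0 closed(2,9) by (force simp: ker_pdn_def)
  then have "\<phi> ` ker_pdn M = ker_pdn N"
    using onto(1) by (auto simp: ker_pdn_def)
  then show "card (ker_pdn N) = card (ker_pdn M)"
    using card_image_\<phi>[of "ker_pdn M"] by (auto simp: ker_pdn_def)
  have "ker_pup M = {y \<in> BuC M. pup N (\<psi> y) = 0}"
    using pup \<phi>_eq_0 closed(1,8) by (force simp: ker_pup_def)
  then have "\<psi> ` ker_pup M = ker_pup N"
    using onto(2) by (auto simp: ker_pup_def)
  then show "card (ker_pup N) = card (ker_pup M)"
    using card_image_\<psi>[of "ker_pup M"] by (auto simp: ker_pup_def)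
qed

lemma zmod_iso_sym:
  assumes "is_zmod sa sb M" "zmod_iso sa sb sc sd M N"
  shows "zmod_iso sc sd sa sb N M"
proof -
  obtain \<phi> \<psi> where lin: "lin_on sa sc (ThC M) \<phi>" "lin_on sb sd (BuC M) \<psi>"
    and bij: "bij_betw \<phi> (ThC M) (ThC N)" "bij_betw \<psi> (BuC M) (BuC N)"
    and tm: "\<forall>x\<in>ThC M. \<phi> (tm M x) = tm N (\<phi> x)"
    and pup: "\<forall>y\<in>BuC M. \<phi> (pup M y) = pup N (\<psi> y)"
    and pdn: "\<forall>x\<in>ThC M. \<psi> (pdn M x) = pdn N (\<phi> x)"
    using assms(2) unfolding zmod_iso_def by blast
  note closed = is_zmod_closed[OF assms(1)]
  define \<phi>' where "\<phi>' = inv_into (ThC M) \<phi>"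
  define \<psi>' where "\<psi>' = inv_into (BuC M) \<psi>"
  have inj: "inj_on \<phi> (ThC M)" "inj_on \<psi> (BuC M)"
    using bij by (auto simp: bij_betw_def)
  have \<phi>': "\<phi>' x \<in> ThC M" "\<phi> (\<phi>' x) = x" if "x \<in> ThC N" for x
    using that bij(1) unfolding \<phi>'_def by (auto simp: bij_betw_def inv_into_into f_inv_into_f)
  have \<psi>': "\<psi>' y \<in> BuC M" "\<psi> (\<psi>' y) = y" if "y \<in> BuC N" for y
    using that bij(2) unfolding \<psi>'_def by (auto simp: bij_betw_def inv_into_into f_inv_into_f)
  have \<phi>'_eq: "\<phi>' x = z" if "z \<in> ThC M" "\<phi> z = x" for x z
    unfolding \<phi>'_def using inv_into_f_eq[OF inj(1)] that .
  have \<psi>'_eq: "\<psi>' y = z" if "z \<in> BuC M" "\<psi> z = y" for y z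
    unfolding \<psi>'_def using inv_into_f_eq[OF inj(2)] that .
  have "lin_on sc sa (ThC N) \<phi>'"
    using lin(1) \<phi>' closed unfolding lin_on_def by (auto intro!: \<phi>'_eq)
  moreover have "lin_on sd sb (BuC N) \<psi>'"
    using lin(2) \<psi>' closed unfolding lin_on_def by (auto intro!: \<psi>'_eq)
  moreover have "\<forall>x\<in>ThC N. \<phi>' (tm N x) = tm M (\<phi>' x)"
    using tm \<phi>' closed by (auto intro!: \<phi>'_eq)
  moreover have "\<forall>y\<in>BuC N. \<phi>' (pup N y) = pup M (\<psi>' y)"
    using pup \<phi>' \<psi>' closed by (auto intro!: \<phi>'_eq)
  moreover have "\<forall>x\<in>ThC N. \<psi>' (pdn N x) = pdn M (\<phi>' x)"
    using pdn \<phi>' \<psi>' closed by (auto intro!: \<psi>'_eq)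
  ultimately show ?thesis
    using bij_betw_inv_into[OF bij(1)] bij_betw_inv_into[OF bij(2)]
    unfolding zmod_iso_def \<phi>'_def \<psi>'_def by blast
qed

section \<open>The standard modules and their direct sums\<close>

lemma all_bit: "(\<forall>c::bit. P c) \<longleftrightarrow> P 0 \<and> P 1"
  by (metis bit.exhaust)

definition scale_pair :: "bit \<Rightarrow> bit \<times> bit \<Rightarrow> bit \<times> bit" where
  "scale_pair c x = (c * fst x, c * snd x)"

lemma sD_eq_pointwise: "sD = (\<lambda>c f i. scale_pair c (f i))"
  by (simp add: sD_def scale_pair_def fun_eq_iff)

lemma sD_zero [simp]: "sD 0 g = 0"
  by (simp add: sD_def fun_eq_iff zero_prod_def)

lemma sD_one [simp]: "sD 1 g = g"
  by (simp only: sD_def mult_1 prod.collapse)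

lemma (in bit_vector_space) lin_on_sD_if_additive:
  assumes "\<And>g h. g \<in> S \<Longrightarrow> h \<in> S \<Longrightarrow> f (g + h) = f g + f h" "f 0 = 0"
  shows "lin_on sD s S f"
  using assms unfolding lin_on_def by (auto simp: all_bit)

lemma vector_space_scale_pair: "vector_space scale_pair"
  by unfold_locales (auto simp: scale_pair_def algebra_simps)

lemma vector_space_pointwise:
  assumes "vector_space s"
  shows "vector_space (\<lambda>c f i. s c (f i))"
proof -
  interpret vector_space s by fact
  show ?thesis by unfold_locales (simp_all add: fun_eq_iff scale_right_distrib scale_left_distrib)
qed

lemma is_zmod_std: "is_zmod scale_pair scale_pair (std K)"
  by (cases K)
    (auto simp: is_zmod_def lin_on_def module.subspace_def module_iff_vector_space
      vector_space_scale_pair all_bit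
      scale_pair_def zero_prod_def)

lemma std_zero: "0 \<in> ThC (std K)" "0 \<in> BuC (std K)"
  using is_zmod_closed[OF is_zmod_std] by blast+

lemma is_zmod_dsum:
  assumes "vector_space sa" "vector_space sb" and zmods: "\<And>i. i \<in> I \<Longrightarrow> is_zmod sa sb (Ms i)"
  shows "is_zmod (\<lambda>c f i. sa c (f i)) (\<lambda>c g i. sb c (g i)) (dsum I Ms)"
proof -
  interpret A: vector_space sa by fact
  interpret B: vector_space sb by fact
  show ?thesis
    unfolding is_zmod_def
    using vector_space_pointwise[OF assms(1)] vector_space_pointwise[OF assms(2)] zmods
    by (auto simp: dsum_def lin_on_def module.subspace_def module_iff_vector_space is_zmod_def
        fun_eq_iff A.subspace_def B.subspace_def image_subset_iff)
qed

abbreviation std_dsum ::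
    "nat \<Rightarrow> (nat \<Rightarrow> kind) \<Rightarrow> (nat \<Rightarrow> bit \<times> bit, nat \<Rightarrow> bit \<times> bit) zmod" where
  "std_dsum n k \<equiv> dsum {..<n} (\<lambda>i. std (k i))"

corollary is_zmod_dsum_std: "is_zmod sD sD (dsum I (\<lambda>i. std (k i)))"
  unfolding sD_eq_pointwise
  by (rule is_zmod_dsum) (simp_all add: vector_space_scale_pair is_zmod_std)

definition Pi_zero :: "'i set \<Rightarrow> ('i \<Rightarrow> 'a set) \<Rightarrow> ('i \<Rightarrow> 'a::zero) set" where
  "Pi_zero I A = {f. (\<forall>i\<in>I. f i \<in> A i) \<and> (\<forall>i. i \<notin> I \<longrightarrow> f i = 0)}"

lemma card_Pi_zero:
  assumes "finite I"
  shows "card (Pi_zero I A) = (\<Prod>i\<in>I. card (A i))"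
proof -
  have "bij_betw (\<lambda>f. restrict f I) (Pi_zero I A) (PiE I A)"
    by (rule bij_betw_byWitness[where f' = "\<lambda>h i. if i \<in> I then h i else 0"])
      (auto simp: Pi_zero_def fun_eq_iff PiE_def extensional_def)
  then show ?thesis using card_PiE[OF assms] by (simp add: bij_betw_same_card)
qed

lemma dsum_invariants:
  fixes Ms :: "'i \<Rightarrow> ('a::monoid_add, 'b::zero) zmod"
  shows "ThC (dsum I Ms) = Pi_zero I (\<lambda>i. ThC (Ms i))"
    and "BuC (dsum I Ms) = Pi_zero I (\<lambda>i. BuC (Ms i))"
    and "im_one_plus_t (dsum I Ms) = Pi_zero I (\<lambda>i. im_one_plus_t (Ms i))"
    and "ker_pdn (dsum I Ms) = Pi_zero I (\<lambda>i. ker_pdn (Ms i))"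
    and "ker_pup (dsum I Ms) = Pi_zero I (\<lambda>i. ker_pup (Ms i))"
proof -
  show "im_one_plus_t (dsum I Ms) = Pi_zero I (\<lambda>i. im_one_plus_t (Ms i))"
  proof
    show "im_one_plus_t (dsum I Ms) \<subseteq> Pi_zero I (\<lambda>i. im_one_plus_t (Ms i))"
      by (auto simp: im_one_plus_t_def dsum_def Pi_zero_def)
  next
    show "Pi_zero I (\<lambda>i. im_one_plus_t (Ms i)) \<subseteq> im_one_plus_t (dsum I Ms)"
    proof
      fix h assume h: "h \<in> Pi_zero I (\<lambda>i. im_one_plus_t (Ms i))"
      define g where
        "g i = (if i \<in> I then inv_into (ThC (Ms i)) (\<lambda>x. x + tm (Ms i) x) (h i) else 0)" for i
      have "g i \<in> ThC (Ms i) \<and> h i = g i + tm (Ms i) (g i)" if "i \<in> I" for i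
        using h that f_inv_into_f[of "h i" "\<lambda>x. x + tm (Ms i) x" "ThC (Ms i)"]
        by (auto simp: g_def Pi_zero_def im_one_plus_t_def inv_into_into)
      then have "g \<in> ThC (dsum I Ms)" "h = g + tm (dsum I Ms) g"
        using h by (auto simp: dsum_def Pi_zero_def fun_eq_iff g_def)
      then show "h \<in> im_one_plus_t (dsum I Ms)" by (auto simp: im_one_plus_t_def)
    qed
  qed
next
  show "ThC (dsum I Ms) = Pi_zero I (\<lambda>i. ThC (Ms i))" "BuC (dsum I Ms) = Pi_zero I (\<lambda>i. BuC (Ms i))"
    by (simp_all add: dsum_def Pi_zero_def)
  show "ker_pdn (dsum I Ms) = Pi_zero I (\<lambda>i. ker_pdn (Ms i))"
    by (auto simp: dsum_def Pi_zero_def ker_pdn_def fun_eq_iff)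
  show "ker_pup (dsum I Ms) = Pi_zero I (\<lambda>i. ker_pup (Ms i))"
    by (auto simp: dsum_def Pi_zero_def ker_pup_def fun_eq_iff)
qed

text \<open>The invariants dTh, dBu, f, kdn and kup of the statement for the standard module of each kind.\<close>

fun kind_dTh :: "kind \<Rightarrow> nat" where
  "kind_dTh KH = 1" | "kind_dTh KHop = 1" | "kind_dTh KF = 2" | "kind_dTh KSbul = 0" | "kind_dTh KSth = 1"

fun kind_dBu :: "kind \<Rightarrow> nat" where
  "kind_dBu KH = 1" | "kind_dBu KHop = 1" | "kind_dBu KF = 1" | "kind_dBu KSbul = 1" | "kind_dBu KSth = 0"

fun kind_f :: "kind \<Rightarrow> nat" where
  "kind_f KH = 0" | "kind_f KHop = 0" | "kind_f KF = 1" | "kind_f KSbul = 0" | "kind_f KSth = 0"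

fun kind_kdn :: "kind \<Rightarrow> nat" where
  "kind_kdn KH = 1" | "kind_kdn KHop = 0" | "kind_kdn KF = 1" | "kind_kdn KSbul = 0" | "kind_kdn KSth = 1"

fun kind_kup :: "kind \<Rightarrow> nat" where
  "kind_kup KH = 0" | "kind_kup KHop = 1" | "kind_kup KF = 0" | "kind_kup KSbul = 1" | "kind_kup KSth = 0"

lemma Collect_bit_pair:
  "{x::bit \<times> bit. P x} = (if P (0, 0) then {(0, 0)} else {}) \<union> (if P (0, 1) then {(0, 1)} else {})
     \<union> (if P (1, 0) then {(1, 0)} else {}) \<union> (if P (1, 1) then {(1, 1)} else {})"
proof (rule set_eqI)
  fix x :: "bit \<times> bit"
  obtain a b where "x = (a, b)" by fastforce
  then show "x \<in> {x. P x} \<longleftrightarrow> x \<in> (if P (0, 0) then {(0, 0)} else {})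
     \<union> (if P (0, 1) then {(0, 1)} else {}) \<union> (if P (1, 0) then {(1, 0)} else {})
     \<union> (if P (1, 1) then {(1, 1)} else {})"
    by (cases a; cases b) auto
qed

lemma UNIV_bit_pair: "(UNIV :: (bit \<times> bit) set) = {(0, 0), (0, 1), (1, 0), (1, 1)}"
  using bit.exhaust by auto

lemma card_std:
  "card (ThC (std K)) = 2 ^ kind_dTh K"
  "card (BuC (std K)) = 2 ^ kind_dBu K"
  "card (im_one_plus_t (std K)) = 2 ^ kind_f K"
  "card (ker_pdn (std K)) = 2 ^ kind_kdn K"
  "card (ker_pup (std K)) = 2 ^ kind_kup K"
  by (cases K;
      simp add: im_one_plus_t_def ker_pdn_def ker_pup_def Collect_bit_pair UNIV_bit_pair
        zero_prod_def card_insert_if)+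

lemma card_dsum_std:
  assumes "finite I"
  shows "card (ThC (dsum I (\<lambda>i. std (k i)))) = 2 ^ (\<Sum>i\<in>I. kind_dTh (k i))"
    and "card (BuC (dsum I (\<lambda>i. std (k i)))) = 2 ^ (\<Sum>i\<in>I. kind_dBu (k i))"
    and "card (im_one_plus_t (dsum I (\<lambda>i. std (k i)))) = 2 ^ (\<Sum>i\<in>I. kind_f (k i))"
    and "card (ker_pdn (dsum I (\<lambda>i. std (k i)))) = 2 ^ (\<Sum>i\<in>I. kind_kdn (k i))"
    and "card (ker_pup (dsum I (\<lambda>i. std (k i)))) = 2 ^ (\<Sum>i\<in>I. kind_kup (k i))"
  by (simp_all add: dsum_invariants card_Pi_zero[OF assms] card_std power_sum)

abbreviation gen_dsum ::
    "(kind \<times> 'x \<times> 'y) list \<Rightarrow> (nat \<Rightarrow> bit \<times> bit, nat \<Rightarrow> bit \<times> bit) zmod" where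
  "gen_dsum L \<equiv> std_dsum (length L) (\<lambda>i. fst (L ! i))"

lemma is_zmod_gen_dsum: "is_zmod sD sD (gen_dsum L)"
  by (rule is_zmod_dsum_std)

lemma card_gen_dsum:
  "card (ThC (gen_dsum L)) = 2 ^ sum_list (map (kind_dTh \<circ> fst) L)"
  "card (BuC (gen_dsum L)) = 2 ^ sum_list (map (kind_dBu \<circ> fst) L)"
  using card_dsum_std(1,2)[of "{..<length L}" "\<lambda>i. fst (L ! i)"]
  by (simp_all add: sum_list_sum_nth atLeast0LessThan)

lemma sum_by_kind:
  fixes n :: nat
  shows "(\<Sum>i<n. c (k i)) = c KH * card {i. i < n \<and> k i = KH} + c KHop * card {i. i < n \<and> k i = KHop}
     + c KF * card {i. i < n \<and> k i = KF} + c KSbul * card {i. i < n \<and> k i = KSbul}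
     + c KSth * card {i. i < n \<and> k i = KSth}"
proof (induction n)
  case (Suc n)
  have "{i. i < Suc n \<and> k i = K} = {i. i < n \<and> k i = K} \<union> (if k n = K then {n} else {})" for K
    by (auto simp: less_Suc_eq)
  then have "card {i. i < Suc n \<and> k i = K} = card {i. i < n \<and> k i = K} + (if k n = K then 1 else 0)"
    for K by (simp add: card_insert_if)
  then show ?case using Suc.IH by (cases "k n") (simp_all add: algebra_simps)
qed simp

section \<open>Finitely generated Z/2-modules\<close>

locale fin_zmod = A: bit_vector_space sa + B: bit_vector_space sb
  for sa :: "bit \<Rightarrow> 'a::ab_group_add \<Rightarrow> 'a" and sb :: "bit \<Rightarrow> 'b::ab_group_add \<Rightarrow> 'b" +
  fixes M :: "('a, 'b) zmod"
  assumes zmod: "is_zmod sa sb M" and fin_gen: "fin_gen sa sb M"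
begin

abbreviation "V \<equiv> ThC M"
abbreviation "W \<equiv> BuC M"
abbreviation "T \<equiv> tm M"
abbreviation "P \<equiv> pup M"
abbreviation "Q \<equiv> pdn M"

lemma subspace_V: "A.subspace V" and subspace_W: "B.subspace W"
  using zmod by (auto simp: is_zmod_def)

lemma V_closed [simp]: "0 \<in> V" "x \<in> V \<Longrightarrow> y \<in> V \<Longrightarrow> x + y \<in> V"
  and W_closed [simp]: "0 \<in> W" "u \<in> W \<Longrightarrow> v \<in> W \<Longrightarrow> u + v \<in> W"
  and maps_closed [simp]:
    "x \<in> V \<Longrightarrow> T x \<in> V" "u \<in> W \<Longrightarrow> P u \<in> V" "x \<in> V \<Longrightarrow> Q x \<in> W"
  using is_zmod_closed[OF zmod] by simp_all

lemma T_add: "x \<in> V \<Longrightarrow> y \<in> V \<Longrightarrow> T (x + y) = T x + T y"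
  and P_add: "u \<in> W \<Longrightarrow> v \<in> W \<Longrightarrow> P (u + v) = P u + P v"
  and Q_add: "x \<in> V \<Longrightarrow> y \<in> V \<Longrightarrow> Q (x + y) = Q x + Q y"
  using zmod by (auto simp: is_zmod_def lin_on_def)

lemma maps_zero [simp]: "T 0 = 0" "P 0 = 0" "Q 0 = 0"
  using T_add[of 0 0] P_add[of 0 0] Q_add[of 0 0] by simp_all

lemma TP [simp]: "u \<in> W \<Longrightarrow> T (P u) = P u"
  and QT [simp]: "x \<in> V \<Longrightarrow> Q (T x) = Q x"
  and TT [simp]: "x \<in> V \<Longrightarrow> T (T x) = x"
  and PQ: "x \<in> V \<Longrightarrow> P (Q x) = x + T x"
  and QP [simp]: "u \<in> W \<Longrightarrow> Q (P u) = 0"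
  using zmod by (auto simp: is_zmod_def)

lemma T_eq_if_PQ_eq_0: "x \<in> V \<Longrightarrow> P (Q x) = 0 \<Longrightarrow> T x = x"
  using PQ[of x] by (metis A.add_self_left add.right_neutral)

lemma finite_V: "finite V" and finite_W: "finite W"
  using fin_gen A.finite_span B.finite_span unfolding fin_gen_def by metis+

lemma subspace_images:
  "A.subspace G \<Longrightarrow> G \<subseteq> V \<Longrightarrow> A.subspace ((\<lambda>x. x + T x) ` G)"
  "A.subspace G \<Longrightarrow> G \<subseteq> V \<Longrightarrow> B.subspace (Q ` G)"
  "B.subspace H \<Longrightarrow> H \<subseteq> W \<Longrightarrow> A.subspace (P ` H)"
  by (auto intro!: A.subspace_additive_image B.subspace_additive_image
      simp: A.subspace_0 A.subspace_add B.subspace_0 B.subspace_add subset_iff T_add Q_add P_add add_ac)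

lemma subspace_im_one_plus_t: "A.subspace (im_one_plus_t M)"
  unfolding im_one_plus_t_def by (rule subspace_images(1)[OF subspace_V order_refl])

lemma subspace_ker_pdn: "A.subspace (ker_pdn M)"
  by (rule A.subspace_if_add_closed) (auto simp: ker_pdn_def Q_add)

lemma subspace_ker_pup: "B.subspace (ker_pup M)"
  by (rule B.subspace_if_add_closed) (auto simp: ker_pup_def P_add)

lemma subspace_im_pup: "A.subspace (P ` W)"
  by (rule subspace_images(3)[OF subspace_W order_refl])

lemma im_one_plus_t_subset_im_pup: "im_one_plus_t M \<subseteq> P ` W"
  unfolding im_one_plus_t_def
proof (rule image_subsetI)
  fix x assume "x \<in> V"
  then have "x + T x = P (Q x)" "Q x \<in> W" by (simp_all add: PQ)
  then show "x + T x \<in> P ` W" by (rule image_eqI)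
qed

lemma im_pup_subset_ker_pdn: "P ` W \<subseteq> ker_pdn M"
  unfolding ker_pdn_def by (rule image_subsetI) simp

lemma dims_of_iso_dsum_std:
  fixes n :: nat
  assumes "zmod_iso sa sb sD sD M (std_dsum n k)"
  shows "A.dim V = (\<Sum>i<n. kind_dTh (k i))"
    and "B.dim W = (\<Sum>i<n. kind_dBu (k i))"
    and "A.dim (im_one_plus_t M) = (\<Sum>i<n. kind_f (k i))"
    and "A.dim (ker_pdn M) = (\<Sum>i<n. kind_kdn (k i))"
    and "B.dim (ker_pup M) = (\<Sum>i<n. kind_kup (k i))"
proof -
  note iso_cards = zmod_iso_card_invariants[OF zmod assms]
  note dsum_cards = card_dsum_std[of "{..<n}" k, OF finite_lessThan]
  have finite: "finite (im_one_plus_t M)" "finite (ker_pdn M)" "finite (ker_pup M)"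
    using finite_V finite_W by (simp_all add: im_one_plus_t_def ker_pdn_def ker_pup_def)
  show "A.dim V = (\<Sum>i<n. kind_dTh (k i))"
    by (rule A.dim_eq_if_card_eq[OF subspace_V finite_V]) (use iso_cards(1) dsum_cards(1) in simp)
  show "B.dim W = (\<Sum>i<n. kind_dBu (k i))"
    by (rule B.dim_eq_if_card_eq[OF subspace_W finite_W]) (use iso_cards(2) dsum_cards(2) in simp)
  show "A.dim (im_one_plus_t M) = (\<Sum>i<n. kind_f (k i))"
    by (rule A.dim_eq_if_card_eq[OF subspace_im_one_plus_t finite(1)])
      (use iso_cards(3) dsum_cards(3) in simp)
  show "A.dim (ker_pdn M) = (\<Sum>i<n. kind_kdn (k i))"
    by (rule A.dim_eq_if_card_eq[OF subspace_ker_pdn finite(2)]) (use iso_cards(4) dsum_cards(4) in simp)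
  show "B.dim (ker_pup M) = (\<Sum>i<n. kind_kup (k i))"
    by (rule B.dim_eq_if_card_eq[OF subspace_ker_pup finite(3)]) (use iso_cards(5) dsum_cards(5) in simp)
qed

definition std_Th_map :: "'a \<Rightarrow> bit \<times> bit \<Rightarrow> 'a" where
  "std_Th_map a x = sa (fst x) a + sa (snd x) (T a)"

definition std_Bu_map :: "'b \<Rightarrow> bit \<times> bit \<Rightarrow> 'b" where
  "std_Bu_map b y = sb (fst y) b"

text \<open>The conditions under which std_Th_map a and std_Bu_map b form a morphism from std K to M.\<close>
definition std_gens :: "kind \<Rightarrow> 'a \<Rightarrow> 'b \<Rightarrow> bool" where
  "std_gens K a b \<longleftrightarrow> (case K of
       KH \<Rightarrow> b \<in> W \<and> a = P b
     | KHop \<Rightarrow> a \<in> V \<and> T a = a \<and> b = Q a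
     | KF \<Rightarrow> a \<in> V \<and> b = Q a
     | KSbul \<Rightarrow> a = 0 \<and> b \<in> W \<and> P b = 0
     | KSth \<Rightarrow> a \<in> V \<and> Q a = 0 \<and> b = 0)"

lemma std_gens_in_carriers: "std_gens K a b \<Longrightarrow> a \<in> V \<and> b \<in> W"
  by (cases K) (auto simp: std_gens_def)

lemma std_Th_map_in_V: "a \<in> V \<Longrightarrow> std_Th_map a x \<in> V"
  by (simp add: std_Th_map_def A.subspace_scale[OF subspace_V])

lemma std_Bu_map_in_W: "b \<in> W \<Longrightarrow> std_Bu_map b y \<in> W"
  by (simp add: std_Bu_map_def B.subspace_scale[OF subspace_W])

lemma std_Th_map_add: "std_Th_map a (x + y) = std_Th_map a x + std_Th_map a y"
  unfolding std_Th_map_def by (simp only: fst_add snd_add A.scale_left_distrib add_ac)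

lemma std_Bu_map_add: "std_Bu_map b (x + y) = std_Bu_map b x + std_Bu_map b y"
  unfolding std_Bu_map_def by (simp only: fst_add B.scale_left_distrib)

lemma std_maps_zero [simp]: "std_Th_map a 0 = 0" "std_Bu_map b 0 = 0"
  by (simp_all add: std_Th_map_def std_Bu_map_def)

lemma std_maps_commute:
  assumes "std_gens K a b"
  shows "x \<in> ThC (std K) \<Longrightarrow> std_Th_map a (tm (std K) x) = T (std_Th_map a x)"
    and "y \<in> BuC (std K) \<Longrightarrow> std_Th_map a (pup (std K) y) = P (std_Bu_map b y)"
    and "x \<in> ThC (std K) \<Longrightarrow> std_Bu_map b (pdn (std K) x) = Q (std_Th_map a x)"
proof -
  have "P b = 0" if "K = KHop" using assms that PQ by (auto simp: std_gens_def)
  moreover have "T a = a" if "K = KSth"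
  proof (rule T_eq_if_PQ_eq_0)
    show "a \<in> V" "P (Q a) = 0" using assms that by (simp_all add: std_gens_def)
  qed
  moreover obtain x1 x2 y1 y2 where "x = (x1, x2)" "y = (y1, y2)" by fastforce
  ultimately show
    "x \<in> ThC (std K) \<Longrightarrow> std_Th_map a (tm (std K) x) = T (std_Th_map a x)"
    "y \<in> BuC (std K) \<Longrightarrow> std_Th_map a (pup (std K) y) = P (std_Bu_map b y)"
    "x \<in> ThC (std K) \<Longrightarrow> std_Bu_map b (pdn (std K) x) = Q (std_Th_map a x)"
    using assms
    by (cases K; cases x1; cases x2; cases y1;
        auto simp: std_gens_def std_Th_map_def std_Bu_map_def T_add Q_add PQ add.commute zero_prod_def)+
qed

text \<open>A list of triples (K, a, b) stands for the direct sum gen_dsum L of the standard modules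
  std K together with the morphism to M that sends the generator (1, 0) of each summand to a and b.\<close>

definition sum_Th_map ::
    "(kind \<times> 'a \<times> 'b) list \<Rightarrow> (nat \<Rightarrow> bit \<times> bit) \<Rightarrow> 'a" where
  "sum_Th_map L g = (\<Sum>i<length L. std_Th_map (fst (snd (L ! i))) (g i))"

definition sum_Bu_map ::
    "(kind \<times> 'a \<times> 'b) list \<Rightarrow> (nat \<Rightarrow> bit \<times> bit) \<Rightarrow> 'b" where
  "sum_Bu_map L h = (\<Sum>i<length L. std_Bu_map (snd (snd (L ! i))) (h i))"

lemma sum_maps_add:
  "sum_Th_map L (g + h) = sum_Th_map L g + sum_Th_map L h"
  "sum_Bu_map L (g + h) = sum_Bu_map L g + sum_Bu_map L h"
  by (simp_all add: sum_Th_map_def sum_Bu_map_def std_Th_map_add std_Bu_map_add sum.distrib)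

lemma sum_maps_zero [simp]: "sum_Th_map L 0 = 0" "sum_Bu_map L 0 = 0"
  by (simp_all add: sum_Th_map_def sum_Bu_map_def)

context
  fixes L :: "(kind \<times> 'a \<times> 'b) list"
  assumes gens: "\<And>K a b. (K, a, b) \<in> set L \<Longrightarrow> std_gens K a b"
begin

lemma gens_nth: "i < length L \<Longrightarrow> std_gens (fst (L ! i)) (fst (snd (L ! i))) (snd (snd (L ! i)))"
  using gens nth_mem by (metis prod.collapse)

lemma std_maps_of_gens_in_carriers:
  "i < length L \<Longrightarrow> std_Th_map (fst (snd (L ! i))) x \<in> V"
  "i < length L \<Longrightarrow> std_Bu_map (snd (snd (L ! i))) y \<in> W"
  using gens_nth std_gens_in_carriers std_Th_map_in_V std_Bu_map_in_W by blast+

lemma sum_maps_in_carriers: "sum_Th_map L g \<in> V" "sum_Bu_map L h \<in> W"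
  by (auto simp: sum_Th_map_def sum_Bu_map_def std_maps_of_gens_in_carriers
      intro!: A.subspace_sum[OF subspace_V] B.subspace_sum[OF subspace_W])

lemma sum_Th_map_tm:
  assumes "g \<in> ThC (gen_dsum L)"
  shows "sum_Th_map L (tm (gen_dsum L) g) = T (sum_Th_map L g)"
proof -
  have "sum_Th_map L (tm (gen_dsum L) g) = (\<Sum>i<length L. T (std_Th_map (fst (snd (L ! i))) (g i)))"
    unfolding sum_Th_map_def using assms
    by (intro sum.cong refl) (simp add: dsum_def std_maps_commute(1)[OF gens_nth])
  also have "\<dots> = T (sum_Th_map L g)"
    unfolding sum_Th_map_def
    by (rule A.additive_on_sum[symmetric, OF subspace_V]) (auto simp: T_add std_maps_of_gens_in_carriers)
  finally show ?thesis .
qed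

lemma sum_Th_map_pup:
  assumes "h \<in> BuC (gen_dsum L)"
  shows "sum_Th_map L (pup (gen_dsum L) h) = P (sum_Bu_map L h)"
proof -
  have "sum_Th_map L (pup (gen_dsum L) h) = (\<Sum>i<length L. P (std_Bu_map (snd (snd (L ! i))) (h i)))"
    unfolding sum_Th_map_def using assms
    by (intro sum.cong refl) (simp add: dsum_def std_maps_commute(2)[OF gens_nth])
  also have "\<dots> = P (sum_Bu_map L h)"
    unfolding sum_Bu_map_def
    by (rule B.additive_on_sum[symmetric, OF subspace_W]) (auto simp: P_add std_maps_of_gens_in_carriers)
  finally show ?thesis .
qed

lemma sum_Bu_map_pdn:
  assumes "g \<in> ThC (gen_dsum L)"
  shows "sum_Bu_map L (pdn (gen_dsum L) g) = Q (sum_Th_map L g)"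
proof -
  have "sum_Bu_map L (pdn (gen_dsum L) g) = (\<Sum>i<length L. Q (std_Th_map (fst (snd (L ! i))) (g i)))"
    unfolding sum_Bu_map_def using assms
    by (intro sum.cong refl) (simp add: dsum_def std_maps_commute(3)[OF gens_nth])
  also have "\<dots> = Q (sum_Th_map L g)"
    unfolding sum_Th_map_def
    by (rule A.additive_on_sum[symmetric, OF subspace_V]) (auto simp: Q_add std_maps_of_gens_in_carriers)
  finally show ?thesis .
qed

lemma entries_in_images:
  assumes "(K, x, y) \<in> set L"
  shows "x \<in> sum_Th_map L ` ThC (gen_dsum L)" "y \<in> sum_Bu_map L ` BuC (gen_dsum L)"
proof -
  obtain i where i: "i < length L" "L ! i = (K, x, y)"
    using assms by (auto simp: in_set_conv_nth)
  define e where "e = (\<lambda>j. if j = i then (1, 0) else (0 :: bit \<times> bit))"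
  have zero: "0 \<in> ThC (gen_dsum L)" "0 \<in> BuC (gen_dsum L)"
    using is_zmod_closed[OF is_zmod_gen_dsum] by blast+
  have "std_Th_map (fst (snd (L ! j))) (e j) = (if j = i then x else 0)"
    and "std_Bu_map (snd (snd (L ! j))) (e j) = (if j = i then y else 0)" for j
    using i(2) by (simp_all add: e_def std_Th_map_def std_Bu_map_def)
  then have "sum_Th_map L e = x" "sum_Bu_map L e = y"
    using i(1) by (simp_all add: sum_Th_map_def sum_Bu_map_def)
  moreover have "e \<in> ThC (gen_dsum L)" if "K \<noteq> KSbul"
  proof -
    have "(1, 0) \<in> ThC (std K)" using that by (cases K) auto
    then show ?thesis using i std_zero by (auto simp: dsum_def e_def)
  qed
  moreover have "e \<in> BuC (gen_dsum L)" if "K \<noteq> KSth"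
  proof -
    have "(1, 0) \<in> BuC (std K)" using that by (cases K) auto
    then show ?thesis using i std_zero by (auto simp: dsum_def e_def)
  qed
  moreover have "x = 0" if "K = KSbul"
    using gens[OF assms] that by (simp add: std_gens_def)
  moreover have "y = 0" if "K = KSth"
    using gens[OF assms] that by (simp add: std_gens_def)
  ultimately show "x \<in> sum_Th_map L ` ThC (gen_dsum L)" "y \<in> sum_Bu_map L ` BuC (gen_dsum L)"
    using zero sum_maps_zero by (metis image_eqI)+
qed

lemma subspace_sum_map_images:
  "A.subspace (sum_Th_map L ` ThC (gen_dsum L))" "B.subspace (sum_Bu_map L ` BuC (gen_dsum L))"
proof -
  note closed = is_zmod_closed[OF is_zmod_gen_dsum]
  show "A.subspace (sum_Th_map L ` ThC (gen_dsum L))"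
    by (rule A.subspace_additive_image) (simp_all add: closed(1,3) sum_maps_add)
  show "B.subspace (sum_Bu_map L ` BuC (gen_dsum L))"
    by (rule B.subspace_additive_image) (simp_all add: closed(2,4) sum_maps_add)
qed

lemma sum_Th_map_image_T_closed:
  assumes "x \<in> sum_Th_map L ` ThC (gen_dsum L)"
  shows "T x \<in> sum_Th_map L ` ThC (gen_dsum L)"
proof -
  obtain g where g: "g \<in> ThC (gen_dsum L)" "x = sum_Th_map L g"
    using assms by blast
  then have "T x = sum_Th_map L (tm (gen_dsum L) g)"
    by (simp add: sum_Th_map_tm)
  moreover have "tm (gen_dsum L) g \<in> ThC (gen_dsum L)"
    using g(1) by (rule is_zmod_closed(7)[OF is_zmod_gen_dsum])
  ultimately show ?thesis by blast
qed

lemma iso_if_sum_maps_onto: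
  assumes "V \<subseteq> sum_Th_map L ` ThC (gen_dsum L)" "W \<subseteq> sum_Bu_map L ` BuC (gen_dsum L)"
    and "card V = card (ThC (gen_dsum L))" "card W = card (BuC (gen_dsum L))"
  shows "zmod_iso sa sb sD sD M (gen_dsum L)"
proof -
  let ?D = "gen_dsum L" and ?\<Phi> = "sum_Th_map L" and ?\<Psi> = "sum_Bu_map L"
  have onto: "?\<Phi> ` ThC ?D = V" "?\<Psi> ` BuC ?D = W"
    using assms(1,2) sum_maps_in_carriers by auto
  have "card V > 0" "card W > 0"
    using finite_V finite_W card_gt_0_iff V_closed(1) W_closed(1) by blast+
  then have "finite (ThC ?D)" "finite (BuC ?D)"
    using assms(3,4) by (simp_all add: card_ge_0_finite)
  then have "bij_betw ?\<Phi> (ThC ?D) V" "bij_betw ?\<Psi> (BuC ?D) W"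
    using onto assms(3,4) by (simp_all add: bij_betw_def eq_card_imp_inj_on)
  moreover have "lin_on sD sa (ThC ?D) ?\<Phi>" "lin_on sD sb (BuC ?D) ?\<Psi>"
    by (simp_all add: A.lin_on_sD_if_additive B.lin_on_sD_if_additive sum_maps_add)
  ultimately have "zmod_iso sD sD sa sb ?D M"
    unfolding zmod_iso_def using sum_Th_map_tm sum_Th_map_pup sum_Bu_map_pdn
    by blast
  then show ?thesis by (rule zmod_iso_sym[OF is_zmod_gen_dsum])
qed

end

lemma V_covered:
  assumes "A.subspace G" "G \<subseteq> V" "ker_pdn M \<subseteq> G"
    and "im_one_plus_t M \<subseteq> (\<lambda>x. x + T x) ` G" "Q ` V \<inter> ker_pup M \<subseteq> Q ` G"
  shows "V \<subseteq> G"
proof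
  fix y assume y: "y \<in> V"
  \<comment> \<open>Adding z \<in> G moves y into the kernel of 1 + t, adding w \<in> G then moves it into ker p_*.\<close>
  have "y + T y \<in> im_one_plus_t M"
    unfolding im_one_plus_t_def using y by (rule imageI)
  then obtain z where z: "z \<in> G" "y + T y = z + T z"
    using assms(4) by blast
  have "z \<in> V" using z(1) assms(2) by blast
  then have yz: "y + z \<in> V" using y by simp
  have "P (Q (y + z)) = (y + T y) + (z + T z)"
    using y \<open>z \<in> V\<close> by (simp only: PQ yz T_add add.assoc add.left_commute)
  also have "\<dots> = 0"
    by (simp only: z(2) A.add_self)
  finally have "Q (y + z) \<in> ker_pup M"
    unfolding ker_pup_def using yz by simp
  moreover have "Q (y + z) \<in> Q ` V"
    using yz by (rule imageI)
  ultimately have "Q (y + z) \<in> Q ` G"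
    using assms(5) by blast
  then obtain w where w: "w \<in> G" "Q w = Q (y + z)"
    by (metis imageE)
  have "w \<in> V" using w(1) assms(2) by blast
  then have "Q ((y + z) + w) = 0"
    using yz by (simp only: Q_add w(2) B.add_self)
  then have "(y + z) + w \<in> ker_pdn M"
    unfolding ker_pdn_def using yz \<open>w \<in> V\<close> by simp
  then have "(y + z) + w \<in> G"
    using assms(3) by blast
  then have "((y + z) + w) + (w + z) \<in> G"
    using A.subspace_add[OF assms(1)] w(1) z(1) by blast
  then show "y \<in> G" by (simp only: add.assoc A.add_self_left A.add_self add_0_right)
qed

lemma W_covered:
  assumes "B.subspace H" "H \<subseteq> W" "ker_pup M \<subseteq> H" "P ` W \<subseteq> P ` H"
  shows "W \<subseteq> H"
proof
  fix w assume w: "w \<in> W"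
  then obtain u where u: "u \<in> H" "P u = P w" using assms(4) by force
  have "u \<in> W" using u assms(2) by auto
  then have "w + u \<in> H"
    using assms(3) w u(2) by (auto simp: ker_pup_def P_add)
  then have "(w + u) + u \<in> H"
    using assms(1) u(1) by (simp add: B.subspace_add)
  then show "w \<in> H" by (simp add: add_ac)
qed

lemma card_V:
  "card V = card (im_one_plus_t M) * card (Q ` V \<inter> ker_pup M) * card (ker_pdn M)"
proof -
  have "Q ` V \<subseteq> W" by auto
  have "card V = card (Q ` V) * card (ker_pdn M)"
    unfolding ker_pdn_def
    by (rule A.card_eq_card_image_mult_card_kernel[OF subspace_V finite_V]) (simp add: Q_add)
  moreover have "card (Q ` V) = card (P ` Q ` V) * card {u \<in> Q ` V. P u = 0}"
  proof (rule B.card_eq_card_image_mult_card_kernel)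
    show "B.subspace (Q ` V)"
      by (rule subspace_images(2)[OF subspace_V order_refl])
    show "finite (Q ` V)" using finite_V by simp
    show "P (u + v) = P u + P v" if "u \<in> Q ` V" "v \<in> Q ` V" for u v
      using that \<open>Q ` V \<subseteq> W\<close> P_add by blast
  qed
  moreover have "P ` Q ` V = im_one_plus_t M"
    unfolding im_one_plus_t_def image_image by (rule image_cong) (simp_all add: PQ)
  moreover have "{u \<in> Q ` V. P u = 0} = Q ` V \<inter> ker_pup M"
    unfolding ker_pup_def using \<open>Q ` V \<subseteq> W\<close> by blast
  ultimately show ?thesis by simp
qed

lemma card_W: "card W = card (P ` W) * card (ker_pup M)"
  unfolding ker_pup_def
  by (rule B.card_eq_card_image_mult_card_kernel[OF subspace_W finite_W]) (simp add: P_add)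

definition gen_list ::
    "'a list \<Rightarrow> 'a list \<Rightarrow> 'b list \<Rightarrow> 'b list \<Rightarrow> 'a list \<Rightarrow> (kind \<times> 'a \<times> 'b) list" where
  "gen_list l1 l2 l3 l4 l5 =
     map (\<lambda>c. (KF, inv_into V (\<lambda>x. x + T x) c, Q (inv_into V (\<lambda>x. x + T x) c))) l1 @
     map (\<lambda>c. (KH, c, inv_into W P c)) l2 @
     map (\<lambda>c. (KHop, inv_into V Q c, c)) l3 @
     map (\<lambda>c. (KSbul, 0, c)) l4 @
     map (\<lambda>c. (KSth, c, 0)) l5"

lemma gen_list_std_gens:
  assumes "set l1 \<subseteq> im_one_plus_t M" "set l2 \<subseteq> P ` W" "set l3 \<subseteq> Q ` V \<inter> ker_pup M"
    and "set l4 \<subseteq> ker_pup M" "set l5 \<subseteq> ker_pdn M" "(K, x, y) \<in> set (gen_list l1 l2 l3 l4 l5)"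
  shows "std_gens K x y"
proof -
  consider (F) c where "c \<in> set l1"
      "(K, x, y) = (KF, inv_into V (\<lambda>x. x + T x) c, Q (inv_into V (\<lambda>x. x + T x) c))"
    | (H) c where "c \<in> set l2" "(K, x, y) = (KH, c, inv_into W P c)"
    | (Hop) c where "c \<in> set l3" "(K, x, y) = (KHop, inv_into V Q c, c)"
    | (Sbul) c where "c \<in> set l4" "(K, x, y) = (KSbul, 0, c)"
    | (Sth) c where "c \<in> set l5" "(K, x, y) = (KSth, c, 0)"
    using assms(6) unfolding gen_list_def by auto
  then show ?thesis
  proof cases
    case F
    then have "c \<in> (\<lambda>x. x + T x) ` V" using assms(1) by (auto simp: im_one_plus_t_def)
    then show ?thesis using F by (simp add: std_gens_def inv_into_into)
  next
    case H
    then have "c \<in> P ` W" using assms(2) by blast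
    then show ?thesis using H by (simp add: std_gens_def inv_into_into f_inv_into_f)
  next
    case Hop
    then have c: "c \<in> Q ` V" "c \<in> W" "P c = 0" using assms(3) by (auto simp: ker_pup_def)
    then have "inv_into V Q c \<in> V" "Q (inv_into V Q c) = c"
      by (simp_all add: inv_into_into f_inv_into_f)
    then show ?thesis using Hop c T_eq_if_PQ_eq_0 by (simp add: std_gens_def)
  next
    case Sbul
    then show ?thesis using assms(4) by (auto simp: std_gens_def ker_pup_def)
  next
    case Sth
    then show ?thesis using assms(5) by (auto simp: std_gens_def ker_pdn_def)
  qed
qed

context
  fixes l1 l2 l5 :: "'a list" and l3 l4 :: "'b list"
  assumes l1: "A.span (set l1) = im_one_plus_t M" and l2: "A.span (set (l1 @ l2)) = P ` W"
    and l5: "A.span (set (l1 @ l2 @ l5)) = ker_pdn M"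
    and l3: "B.span (set l3) = Q ` V \<inter> ker_pup M" and l4: "B.span (set (l3 @ l4)) = ker_pup M"
begin

lemma basis_lists_in_invariants:
  "set l1 \<subseteq> im_one_plus_t M" "set l2 \<subseteq> P ` W" "set l5 \<subseteq> ker_pdn M"
  "set l3 \<subseteq> Q ` V \<inter> ker_pup M" "set l4 \<subseteq> ker_pup M"
proof -
  show "set l1 \<subseteq> im_one_plus_t M" "set l2 \<subseteq> P ` W" "set l5 \<subseteq> ker_pdn M"
    using A.span_superset[of "set l1"] A.span_superset[of "set (l1 @ l2)"]
      A.span_superset[of "set (l1 @ l2 @ l5)"] l1 l2 l5 by auto
  show "set l3 \<subseteq> Q ` V \<inter> ker_pup M" "set l4 \<subseteq> ker_pup M"
    using B.span_superset[of "set l3"] B.span_superset[of "set (l3 @ l4)"] l3 l4 by auto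
qed

lemma gen_list_gens: "(K, x, y) \<in> set (gen_list l1 l2 l3 l4 l5) \<Longrightarrow> std_gens K x y"
  using basis_lists_in_invariants by (intro gen_list_std_gens)

abbreviation "Th_gen \<equiv> sum_Th_map (gen_list l1 l2 l3 l4 l5) ` ThC (gen_dsum (gen_list l1 l2 l3 l4 l5))"
abbreviation "Bu_gen \<equiv> sum_Bu_map (gen_list l1 l2 l3 l4 l5) ` BuC (gen_dsum (gen_list l1 l2 l3 l4 l5))"

lemma gen_subspaces: "A.subspace Th_gen" "Th_gen \<subseteq> V" "B.subspace Bu_gen" "Bu_gen \<subseteq> W"
  using subspace_sum_map_images[OF gen_list_gens] sum_maps_in_carriers[OF gen_list_gens] by blast+

lemma entries_in_gen:
  "(K, x, y) \<in> set (gen_list l1 l2 l3 l4 l5) \<Longrightarrow> x \<in> Th_gen"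
  "(K, x, y) \<in> set (gen_list l1 l2 l3 l4 l5) \<Longrightarrow> y \<in> Bu_gen"
  using entries_in_images[OF gen_list_gens] by blast+

lemma basis_list_1_in_gen:
  assumes "c \<in> set l1"
  shows "c \<in> Th_gen" "c \<in> (\<lambda>x. x + T x) ` Th_gen" "c \<in> P ` Bu_gen"
proof -
  define x where "x = inv_into V (\<lambda>x. x + T x) c"
  have "c \<in> (\<lambda>x. x + T x) ` V"
    using assms basis_lists_in_invariants(1) unfolding im_one_plus_t_def by blast
  then have x: "x \<in> V" "c = x + T x"
    unfolding x_def using f_inv_into_f[of c "\<lambda>x. x + T x" V] by (simp_all add: inv_into_into)
  have "(KF, x, Q x) \<in> set (gen_list l1 l2 l3 l4 l5)"
    unfolding gen_list_def set_append set_map x_def using assms by blast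
  then have "x \<in> Th_gen" "Q x \<in> Bu_gen"
    by (rule entries_in_gen)+
  have "T x \<in> Th_gen"
    by (rule sum_Th_map_image_T_closed) (use gen_list_gens \<open>x \<in> Th_gen\<close> in blast)+
  then have "x + T x \<in> Th_gen"
    by (rule A.subspace_add[OF gen_subspaces(1) \<open>x \<in> Th_gen\<close>])
  then show "c \<in> Th_gen" using x(2) by simp
  show "c \<in> (\<lambda>x. x + T x) ` Th_gen"
    using x(2) \<open>x \<in> Th_gen\<close> by (rule image_eqI)
  have "c = P (Q x)"
    using x by (simp add: PQ)
  then show "c \<in> P ` Bu_gen"
    using \<open>Q x \<in> Bu_gen\<close> by (rule image_eqI)
qed

lemma basis_lists_in_gen:
  shows "c \<in> set l2 \<Longrightarrow> c \<in> Th_gen \<and> c \<in> P ` Bu_gen"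
    and "d \<in> set l3 \<Longrightarrow> d \<in> Q ` Th_gen \<and> d \<in> Bu_gen"
    and "d \<in> set l4 \<Longrightarrow> d \<in> Bu_gen"
    and "c \<in> set l5 \<Longrightarrow> c \<in> Th_gen"
proof -
  assume c: "c \<in> set l2"
  define u where "u = inv_into W P c"
  have u: "u \<in> W" "c = P u"
    using c basis_lists_in_invariants(2) unfolding u_def by (auto simp: inv_into_into f_inv_into_f)
  have "(KH, c, u) \<in> set (gen_list l1 l2 l3 l4 l5)"
    unfolding gen_list_def set_append set_map u_def using c by blast
  then have "c \<in> Th_gen" "u \<in> Bu_gen"
    by (rule entries_in_gen)+
  then show "c \<in> Th_gen \<and> c \<in> P ` Bu_gen"
    using image_eqI[where f = P, OF u(2)] by simp
next
  assume d: "d \<in> set l3"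
  define v where "v = inv_into V Q d"
  have v: "v \<in> V" "d = Q v"
    using d basis_lists_in_invariants(4) unfolding v_def by (auto simp: inv_into_into f_inv_into_f)
  have "(KHop, v, d) \<in> set (gen_list l1 l2 l3 l4 l5)"
    unfolding gen_list_def set_append set_map v_def using d by blast
  then have "v \<in> Th_gen" "d \<in> Bu_gen"
    by (rule entries_in_gen)+
  then show "d \<in> Q ` Th_gen \<and> d \<in> Bu_gen"
    using image_eqI[where f = Q, OF v(2)] by simp
next
  assume "d \<in> set l4"
  then have "(KSbul, 0, d) \<in> set (gen_list l1 l2 l3 l4 l5)"
    unfolding gen_list_def set_append set_map by blast
  then show "d \<in> Bu_gen" by (rule entries_in_gen)
next
  assume "c \<in> set l5"
  then have "(KSth, c, 0) \<in> set (gen_list l1 l2 l3 l4 l5)"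
    unfolding gen_list_def set_append set_map by blast
  then show "c \<in> Th_gen" by (rule entries_in_gen)
qed

lemma gen_list_covers: "V \<subseteq> Th_gen" "W \<subseteq> Bu_gen"
proof -
  note G = gen_subspaces(1,2) and H = gen_subspaces(3,4)
  show "V \<subseteq> Th_gen"
  proof (rule V_covered[OF G])
    have "set (l1 @ l2 @ l5) \<subseteq> Th_gen"
      unfolding set_append using basis_list_1_in_gen(1) basis_lists_in_gen(1,4) by blast
    then show "ker_pdn M \<subseteq> Th_gen"
      unfolding l5[symmetric] using G(1) by (rule A.span_minimal)
    have "set l1 \<subseteq> (\<lambda>x. x + T x) ` Th_gen"
      using basis_list_1_in_gen(2) by blast
    then show "im_one_plus_t M \<subseteq> (\<lambda>x. x + T x) ` Th_gen"
      unfolding l1[symmetric] using subspace_images(1)[OF G] by (rule A.span_minimal)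
    have "set l3 \<subseteq> Q ` Th_gen"
      using basis_lists_in_gen(2) by blast
    then show "Q ` V \<inter> ker_pup M \<subseteq> Q ` Th_gen"
      unfolding l3[symmetric] using subspace_images(2)[OF G] by (rule B.span_minimal)
  qed
  show "W \<subseteq> Bu_gen"
  proof (rule W_covered[OF H])
    have "set (l3 @ l4) \<subseteq> Bu_gen"
      unfolding set_append using basis_lists_in_gen(2,3) by blast
    then show "ker_pup M \<subseteq> Bu_gen"
      unfolding l4[symmetric] using H(1) by (rule B.span_minimal)
    have "set (l1 @ l2) \<subseteq> P ` Bu_gen"
      unfolding set_append using basis_list_1_in_gen(3) basis_lists_in_gen(1) by blast
    then show "P ` W \<subseteq> P ` Bu_gen"
      unfolding l2[symmetric] using subspace_images(3)[OF H] by (rule A.span_minimal)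
  qed
qed

lemma gen_list_cards:
  assumes "distinct (l1 @ l2 @ l5)" "A.independent (set (l1 @ l2 @ l5))"
    and "distinct (l3 @ l4)" "B.independent (set (l3 @ l4))"
  shows "card V = card (ThC (gen_dsum (gen_list l1 l2 l3 l4 l5)))"
    and "card W = card (BuC (gen_dsum (gen_list l1 l2 l3 l4 l5)))"
proof -
  have "A.independent (set l1)" "A.independent (set (l1 @ l2))" "B.independent (set l3)"
    by (rule A.independent_mono[OF assms(2)] B.independent_mono[OF assms(4)]; auto)+
  moreover have "distinct (l1 @ l2)" using assms(1) by auto
  ultimately have "card (im_one_plus_t M) = 2 ^ length l1" "card (P ` W) = 2 ^ (length l1 + length l2)"
    "card (ker_pdn M) = 2 ^ (length l1 + length l2 + length l5)"
    using A.card_span_list[of l1] A.card_span_list[of "l1 @ l2"] A.card_span_list[of "l1 @ l2 @ l5"]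
      assms(1,2) l1 l2 l5 by simp_all
  moreover have "card (Q ` V \<inter> ker_pup M) = 2 ^ length l3"
    "card (ker_pup M) = 2 ^ (length l3 + length l4)"
    using B.card_span_list[of l3] B.card_span_list[of "l3 @ l4"]
      \<open>B.independent (set l3)\<close> assms(3,4) l3 l4 by auto
  ultimately show "card V = card (ThC (gen_dsum (gen_list l1 l2 l3 l4 l5)))"
    and "card W = card (BuC (gen_dsum (gen_list l1 l2 l3 l4 l5)))"
    unfolding card_V card_W card_gen_dsum
    by (simp_all add: gen_list_def comp_def sum_list_triv mult_2_right power_add mult_ac)
qed

end

lemma exists_filtration_bases:
  obtains l1 l2 l5 :: "'a list" and l3 l4 :: "'b list" where
    "A.span (set l1) = im_one_plus_t M" "A.span (set (l1 @ l2)) = P ` W"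
    "A.span (set (l1 @ l2 @ l5)) = ker_pdn M" "B.span (set l3) = Q ` V \<inter> ker_pup M"
    "B.span (set (l3 @ l4)) = ker_pup M"
    "distinct (l1 @ l2 @ l5)" "A.independent (set (l1 @ l2 @ l5))"
    "distinct (l3 @ l4)" "B.independent (set (l3 @ l4))"
proof -
  have finite: "finite (im_one_plus_t M)" "finite (P ` W)" "finite (ker_pdn M)"
    "finite (Q ` V \<inter> ker_pup M)" "finite (ker_pup M)"
    using finite_V finite_W by (simp_all add: im_one_plus_t_def ker_pdn_def ker_pup_def)
  have subspace: "B.subspace (Q ` V \<inter> ker_pup M)"
    using subspace_images(2)[OF subspace_V order_refl] by (rule B.subspace_inter[OF _ subspace_ker_pup])
  obtain l1 where l1: "distinct l1" "A.independent (set l1)" "A.span (set l1) = im_one_plus_t M"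
    using A.exists_basis_list[OF subspace_im_one_plus_t finite(1)] by blast
  moreover have "set l1 \<subseteq> P ` W"
    using A.span_superset[of "set l1"] l1(3) im_one_plus_t_subset_im_pup by blast
  ultimately obtain l2 where l2: "distinct (l1 @ l2)" "A.independent (set (l1 @ l2))"
    "A.span (set (l1 @ l2)) = P ` W"
    using A.extend_basis_list[OF subspace_im_pup finite(2)] by blast
  moreover have "set (l1 @ l2) \<subseteq> ker_pdn M"
    using A.span_superset[of "set (l1 @ l2)"] l2(3) im_pup_subset_ker_pdn by blast
  ultimately obtain l5 where l5: "distinct (l1 @ l2 @ l5)" "A.independent (set (l1 @ l2 @ l5))"
    "A.span (set (l1 @ l2 @ l5)) = ker_pdn M"
    using A.extend_basis_list[OF subspace_ker_pdn finite(3), of "l1 @ l2"] by auto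
  obtain l3 where l3: "distinct l3" "B.independent (set l3)" "B.span (set l3) = Q ` V \<inter> ker_pup M"
    using B.exists_basis_list[OF subspace finite(4)] by blast
  moreover have "set l3 \<subseteq> ker_pup M"
    using B.span_superset[of "set l3"] l3(3) by blast
  ultimately obtain l4 where l4: "distinct (l3 @ l4)" "B.independent (set (l3 @ l4))"
    "B.span (set (l3 @ l4)) = ker_pup M"
    using B.extend_basis_list[OF subspace_ker_pup finite(5)] by blast
  show thesis
    by (rule that[of l1 l2 l5 l3 l4]) (fact l1(3) l2(3) l5 l3(3) l4)+
qed

lemma exists_iso_std_dsum: "\<exists>n k. zmod_iso sa sb sD sD M (std_dsum n k)"
proof -
  obtain l1 l2 l5 l3 l4 where spans:
    "A.span (set l1) = im_one_plus_t M" "A.span (set (l1 @ l2)) = P ` W"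
    "A.span (set (l1 @ l2 @ l5)) = ker_pdn M" "B.span (set l3) = Q ` V \<inter> ker_pup M"
    "B.span (set (l3 @ l4)) = ker_pup M"
    and bases: "distinct (l1 @ l2 @ l5)" "A.independent (set (l1 @ l2 @ l5))"
    "distinct (l3 @ l4)" "B.independent (set (l3 @ l4))"
    by (rule exists_filtration_bases)
  define L where "L = gen_list l1 l2 l3 l4 l5"
  have "zmod_iso sa sb sD sD M (gen_dsum L)"
    unfolding L_def using iso_if_sum_maps_onto[OF gen_list_gens[OF spans] gen_list_covers[OF spans]
        gen_list_cards[OF spans bases]] .
  then show ?thesis by (intro exI[of _ "length L"] exI[of _ "\<lambda>i. fst (L ! i)"])
qed

end

theorem proposition3p9:
  fixes sa :: "bit \<Rightarrow> 'a::ab_group_add \<Rightarrow> 'a"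
    and sb :: "bit \<Rightarrow> 'b::ab_group_add \<Rightarrow> 'b"
    and M :: "('a, 'b) zmod"
  assumes "is_zmod sa sb M" and "fin_gen sa sb M"
  defines "f \<equiv> int (vector_space.dim sa ((\<lambda>x. x + tm M x) ` ThC M))"
    and "dTh \<equiv> int (vector_space.dim sa (ThC M))"
    and "dBu \<equiv> int (vector_space.dim sb (BuC M))"
    and "kdn \<equiv> int (vector_space.dim sa {x \<in> ThC M. pdn M x = 0})"
    and "kup \<equiv> int (vector_space.dim sb {y \<in> BuC M. pup M y = 0})"
  shows "(\<exists>(n::nat) k. zmod_iso sa sb sD sD M (dsum {..<n} (\<lambda>i. std (k i)))) \<and>
         (\<forall>(n::nat) k. zmod_iso sa sb sD sD M (dsum {..<n} (\<lambda>i. std (k i))) \<longrightarrow>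
            int (card {i. i < n \<and> k i = KF}) = f \<and>
            int (card {i. i < n \<and> k i = KHop}) = dTh - f - kdn \<and>
            int (card {i. i < n \<and> k i = KH}) = dBu - kup - f \<and>
            int (card {i. i < n \<and> k i = KSbul}) = kup - dTh + f + kdn \<and>
            int (card {i. i < n \<and> k i = KSth}) = kdn - dBu + kup)"
proof -
  interpret fin_zmod sa sb M
    using assms(1,2) by (simp add: fin_zmod_def fin_zmod_axioms_def bit_vector_space_def is_zmod_def)
  show ?thesis
  proof (intro conjI allI impI)
    show "\<exists>(n::nat) k. zmod_iso sa sb sD sD M (dsum {..<n} (\<lambda>i. std (k i)))"
      by (rule exists_iso_std_dsum)
    fix n :: nat and k
    assume "zmod_iso sa sb sD sD M (dsum {..<n} (\<lambda>i. std (k i)))"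
    note dims = dims_of_iso_dsum_std[OF this, unfolded sum_by_kind, simplified]
    show "int (card {i. i < n \<and> k i = KF}) = f"
      and "int (card {i. i < n \<and> k i = KHop}) = dTh - f - kdn"
      and "int (card {i. i < n \<and> k i = KH}) = dBu - kup - f"
      and "int (card {i. i < n \<and> k i = KSbul}) = kup - dTh + f + kdn"
      and "int (card {i. i < n \<and> k i = KSth}) = kdn - dBu + kup"
      using dims unfolding f_def dTh_def dBu_def kdn_def kup_def im_one_plus_t_def ker_pdn_def ker_pup_def
      by linarith+
  qed
qed

end
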